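(* In the construction described in the context, assume Assumption 4.3 holds, and let $\mathcal{K}((\xi,\vec\theta),\cdot)=\sum_{i=1}^n\tilde\omega_i(\xi)P_i((\xi,\vec\theta),\cdot)$ be the kernel of the Mixed Skew Metropolis–Hastings chain with the weights $\tilde\omega_i$ given there. Then for any two states $\xi,\xi'\in\Xi$ and any $i\in\{1,\dots,n\}$ with $i\in\mathcal{A}(\xi)$ and $i\notin\mathcal{A}(\xi')$, we have $P_i((\xi,\vec\theta),(\xi',\vec\theta))=0$ for every $\vec\theta\in\{-1,1\}^n$.
   Context: Let $\Xi$ be a countable set, $\tilde\pi$ a probability measure on $\Xi$ and $\tilde Q$ a Markov kernel on $\Xi$. Assumption 4.3: (i) $\tilde\pi(\xi)>0$ for all $\xi$; (ii) $\tilde Q(\xi,\xi')\ne0$ iff $\tilde Q(\xi',\xi)\ne0$; (iii) the chain generated by $\tilde Q$ is irreducible. State graph $\mathcal{G}=(\mathcal{V},\mathcal{E})$, $\mathcal{V}=\Xi$, $\mathcal{E}=\{(\xi,\xi'):\tilde Q(\xi,\xi')>0\}$. For $i=1,\dots,n$, $\mathcal{G}_i^+=(\mathcal{V}_i,\mathcal{E}_i^+)$ are directed subgraphs of $\mathcal{G}$ without isolated vertices; $\mathcal{E}_i^-=\{(u,v):(v,u)\in\mathcal{E}_i^+\}$, $\mathcal{E}_i=\mathcal{E}_i^+\cup\mathcal{E}_i^-$, with $\mathcal{V}=\bigcup_i\mathcal{V}_i$, $\mathcal{E}=\bigcup_i\mathcal{E}_i$. $\mathcal{N}_i^{\pm}(\xi)=\{\xi':(\xi,\xi')\in\mathcal{E}_i^{\pm}\}$,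 and $\mathcal{N}_i^\theta$ is $\mathcal{N}_i^+$ for $\theta=+1$, $\mathcal{N}_i^-$ for $\theta=-1$. Extended space $\mathcal{X}=\Xi\times\{-1,1\}^n$; $\mathcal{X}_i=\mathcal{V}_i\times\{-1,1\}^n$; $R_i$ flips the sign of the $i$-th component of $\vec\theta$; $S_i(\xi,\vec\theta)=(\xi,R_i(\vec\theta))$. For $(\xi,\vec\theta)\in\mathcal{X}_i$: $Q_i((\xi,\vec\theta),(\xi',\vec\theta'))=\tilde Q(\xi,\xi')/\tilde Q(\xi,\mathcal{N}_i^{\theta_i}(\xi))$ if $\xi'\in\mathcal{N}_i^{\theta_i}(\xi)$, $\vec\theta'=\vec\theta$; $=1$ if $\mathcal{N}_i^{\theta_i}(\xi)=\emptyset$, $\xi'=\xi$, $\vec\theta'=R_i(\vec\theta)$; $=0$ otherwise. Weights $\tilde\omega_i(\xi)=\tilde Q(\xi,\mathcal{N}_i^+(\xi))+\tilde Q(\xi,\mathcal{N}_i^-(\xi))$ (assumed to sum to one over $i$); active set $\mathcal{A}(\xi)=\{i:\tilde\omega_i(\xi)>0\}$. For $x=(\xi,\vec\theta)\in\mathcal{X}_i$, $x'=(\xi',\vec\theta')$: $r_i(x,x')=\frac{\tilde\omega_i(\xi')\tilde\pi(\xi')Q_i((\xi',R_i\vec\theta'),(\xi,R_i\vec\theta))}{\tilde\omega_i(\xi)\tilde\pi(\xi)Q_i((\xi,\vec\theta),(\xi',\vec\theta'))}$ and $P_i(x,x')=Q_i(x,x')\min(1,r_i(x,x'))+\mathbb{1}_{\{S_i(x)\}}(x')[1-\sum_{\tilde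 x}Q_i(x,\tilde x)\min(1,r_i(x,\tilde x))]$. *)

theory Defs
  imports "HOL-Analysis.Analysis"
begin

definition state_edges :: "('a \<Rightarrow> 'a \<Rightarrow> real) \<Rightarrow> ('a \<times> 'a) set" where
  "state_edges Q = {(x, y). Q x y > 0}"

definition nbhd :: "('a \<times> 'a) set \<Rightarrow> 'a \<Rightarrow> 'a set" where
  "nbhd E xi = {xi'. (xi, xi') \<in> E}"

definition nbhd_theta :: "(nat \<Rightarrow> ('a \<times> 'a) set) \<Rightarrow> nat \<Rightarrow> int \<Rightarrow> 'a \<Rightarrow> 'a set" where
  "nbhd_theta Ep i t xi = (if t = 1 then nbhd (Ep i) xi else nbhd (converse (Ep i)) xi)"

text \<open>The sign vectors in {-1,1}^n, indexed by 1..n (value 1 outside, for canonicity).\<close>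
definition thetas :: "nat \<Rightarrow> (nat \<Rightarrow> int) set" where
  "thetas n = {th. (\<forall>j\<in>{1..n}. th j = 1 \<or> th j = -1) \<and> (\<forall>j. j \<notin> {1..n} \<longrightarrow> th j = 1)}"

definition flip :: "nat \<Rightarrow> (nat \<Rightarrow> int) \<Rightarrow> (nat \<Rightarrow> int)" where
  "flip i th = th(i := - th i)"

definition S_op :: "nat \<Rightarrow> 'a \<times> (nat \<Rightarrow> int) \<Rightarrow> 'a \<times> (nat \<Rightarrow> int)" where
  "S_op i x = (fst x, flip i (snd x))"

definition omega :: "('a \<Rightarrow> 'a \<Rightarrow> real) \<Rightarrow> (nat \<Rightarrow> ('a \<times> 'a) set) \<Rightarrow> nat \<Rightarrow> 'a \<Rightarrow> real" where
  "omega Q Ep i xi = infsum (Q xi) (nbhd (Ep i) xi) + infsum (Q xi) (nbhd (converse (Ep i)) xi)"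

definition active :: "nat \<Rightarrow> ('a \<Rightarrow> 'a \<Rightarrow> real) \<Rightarrow> (nat \<Rightarrow> ('a \<times> 'a) set) \<Rightarrow> 'a \<Rightarrow> nat set" where
  "active n Q Ep xi = {i \<in> {1..n}. omega Q Ep i xi > 0}"

definition Q_i :: "('a \<Rightarrow> 'a \<Rightarrow> real) \<Rightarrow> (nat \<Rightarrow> ('a \<times> 'a) set) \<Rightarrow> nat
    \<Rightarrow> 'a \<times> (nat \<Rightarrow> int) \<Rightarrow> 'a \<times> (nat \<Rightarrow> int) \<Rightarrow> real" where
  "Q_i Q Ep i x x' =
    (let xi = fst x; th = snd x; xi' = fst x'; th' = snd x'; N = nbhd_theta Ep i (th i) xi in
     if xi' \<in> N \<and> th' = th then Q xi xi' / infsum (Q xi) N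
     else if N = {} \<and> xi' = xi \<and> th' = flip i th then 1
     else 0)"

definition r_i :: "('a \<Rightarrow> 'a \<Rightarrow> real) \<Rightarrow> ('a \<Rightarrow> real) \<Rightarrow> (nat \<Rightarrow> ('a \<times> 'a) set) \<Rightarrow> nat
    \<Rightarrow> 'a \<times> (nat \<Rightarrow> int) \<Rightarrow> 'a \<times> (nat \<Rightarrow> int) \<Rightarrow> real" where
  "r_i Q p Ep i x x' =
    (omega Q Ep i (fst x') * p (fst x') * Q_i Q Ep i (S_op i x') (S_op i x)) /
    (omega Q Ep i (fst x) * p (fst x) * Q_i Q Ep i x x')"

definition P_i :: "nat \<Rightarrow> ('a \<Rightarrow> 'a \<Rightarrow> real) \<Rightarrow> ('a \<Rightarrow> real) \<Rightarrow> (nat \<Rightarrow> ('a \<times> 'a) set) \<Rightarrow> nat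
    \<Rightarrow> 'a \<times> (nat \<Rightarrow> int) \<Rightarrow> 'a \<times> (nat \<Rightarrow> int) \<Rightarrow> real" where
  "P_i n Q p Ep i x x' =
    Q_i Q Ep i x x' * min 1 (r_i Q p Ep i x x') +
    (if x' = S_op i x
     then 1 - infsum (\<lambda>y. Q_i Q Ep i x y * min 1 (r_i Q p Ep i x y)) (UNIV \<times> thetas n)
     else 0)"

definition K_mix :: "nat \<Rightarrow> ('a \<Rightarrow> 'a \<Rightarrow> real) \<Rightarrow> ('a \<Rightarrow> real) \<Rightarrow> (nat \<Rightarrow> ('a \<times> 'a) set)
    \<Rightarrow> 'a \<times> (nat \<Rightarrow> int) \<Rightarrow> 'a \<times> (nat \<Rightarrow> int) \<Rightarrow> real" where
  "K_mix n Q p Ep x x' = (\<Sum>i=1..n. omega Q Ep i (fst x) * P_i n Q p Ep i x x')"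

end

theory Submission
  imports Defs
begin

text \<open>A move of the \<open>i\<close>-th skew kernel that keeps the direction vector is never the
  flip move \<open>S_op i\<close>, so it is accepted with probability \<open>min 1 r\<^sub>i\<close>; and \<open>r\<^sub>i\<close> carries the
  weight \<open>\<omega>\<^sub>i\<close> of the target state in its numerator, which vanishes when \<open>i\<close> is inactive
  there.\<close>

lemma omega_nonneg:
  assumes "\<And>x y. Q x y \<ge> 0"
  shows "omega Q Ep i xi \<ge> 0"
  unfolding omega_def by (intro add_nonneg_nonneg infsum_nonneg) (simp_all add: assms)

lemma omega_eq_0_if_not_active:
  assumes "\<And>x y. Q x y \<ge> 0" and "i \<in> {1..n}" and "i \<notin> active n Q Ep xi"
  shows "omega Q Ep i xi = 0"
  using omega_nonneg[of Q Ep i xi] assms by (fastforce simp: active_def)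

lemma thetas_nonzero:
  assumes "th \<in> thetas n"
  shows "th j \<noteq> 0"
  using assms unfolding thetas_def by (cases "j \<in> {1..n}") force+

lemma flip_neq:
  assumes "th i \<noteq> 0"
  shows "flip i th \<noteq> th"
proof
  assume "flip i th = th"
  then have "- th i = th i" unfolding flip_def by (metis fun_upd_same)
  with assms show False by simp
qed

lemma S_op_neq_same_direction:
  assumes "th \<in> thetas n"
  shows "(xi', th) \<noteq> S_op i (xi, th)"
  using flip_neq[of th i] thetas_nonzero[OF assms, of i] by (auto simp: S_op_def)

lemma P_i_eq_if_neq_S_op:
  assumes "x' \<noteq> S_op i x"
  shows "P_i n Q p Ep i x x' = Q_i Q Ep i x x' * min 1 (r_i Q p Ep i x x')"
  using assms by (simp add: P_i_def)

lemma r_i_eq_0_if_omega_target_eq_0: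
  assumes "omega Q Ep i (fst x') = 0"
  shows "r_i Q p Ep i x x' = 0"
  using assms by (simp add: r_i_def)

theorem lemmaB3:
  fixes p :: "'a::countable \<Rightarrow> real"
    and Q :: "'a \<Rightarrow> 'a \<Rightarrow> real"
    and n :: nat
    and V :: "nat \<Rightarrow> 'a set"
    and Ep :: "nat \<Rightarrow> ('a \<times> 'a) set"
  assumes p_nonneg: "\<And>x. p x \<ge> 0"
    and p_prob: "(p has_sum 1) UNIV"
    and Q_nonneg: "\<And>x y. Q x y \<ge> 0"
    and Q_markov: "\<And>x. (Q x has_sum 1) UNIV"
    and A43_i: "\<And>x. p x > 0"
    and A43_ii: "\<And>x y. Q x y \<noteq> 0 \<longleftrightarrow> Q y x \<noteq> 0"
    and A43_iii: "\<And>x y. (x, y) \<in> (state_edges Q)\<^sup>*"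
    and sub_edges: "\<And>i. i \<in> {1..n} \<Longrightarrow> Ep i \<subseteq> state_edges Q"
    and sub_verts: "\<And>i. i \<in> {1..n} \<Longrightarrow> Ep i \<subseteq> V i \<times> V i"
    and no_isolated: "\<And>i v. i \<in> {1..n} \<Longrightarrow> v \<in> V i \<Longrightarrow> \<exists>w. (v, w) \<in> Ep i \<or> (w, v) \<in> Ep i"
    and cover_V: "(\<Union>i\<in>{1..n}. V i) = UNIV"
    and cover_E: "(\<Union>i\<in>{1..n}. Ep i \<union> converse (Ep i)) = state_edges Q"
    and weights_sum: "\<And>xi. (\<Sum>i=1..n. omega Q Ep i xi) = 1"
    and i_range: "i \<in> {1..n}"
    and act: "i \<in> active n Q Ep xi"
    and nact: "i \<notin> active n Q Ep xi'"
    and th: "th \<in> thetas n"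
  shows "P_i n Q p Ep i (xi, th) (xi', th) = 0"
proof -
  have "omega Q Ep i xi' = 0"
    using Q_nonneg i_range nact by (rule omega_eq_0_if_not_active)
  then have "r_i Q p Ep i (xi, th) (xi', th) = 0"
    by (simp add: r_i_eq_0_if_omega_target_eq_0)
  moreover have "P_i n Q p Ep i (xi, th) (xi', th)
      = Q_i Q Ep i (xi, th) (xi', th) * min 1 (r_i Q p Ep i (xi, th) (xi', th))"
    using th by (intro P_i_eq_if_neq_S_op S_op_neq_same_direction)
  ultimately show ?thesis by simp
qed

end
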